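(* Let $U$ be a unitary acting on $n$ qubits and let $\{u_1,\ldots,u_{2^n}\}$ be the columns of $U$. The unitary $U$ can be simulated using the unitary \[ U'=|0\rangle\langle 1|\otimes U+|1\rangle\langle 0|\otimes U^{\dagger}. \] The unitary $U'$ is a product of reflection operators constructed from the family of unit vectors \[ |w_j^{\pm}\rangle=\left(|1\rangle\otimes|j\rangle\pm|0\rangle\otimes|u_j\rangle\right)/\sqrt{2},\quad j=1,\ldots,2^n. \]
   Context: For a unit vector $|\psi\rangle$, the reflection operator is $R_{|\psi\rangle}=\mathbb{I}-2|\psi\rangle\langle\psi|$. Here $|j\rangle$ denotes the computational basis states of $n$ qubits and $|u_j\rangle$ the state given by the $j$-th column of $U$. "Simulated" means $U'$ maps $|1\rangle\otimes|\phi\rangle$ to $|0\rangle\otimes U|\phi\rangle$ for every $n$-qubit state $|\phi\rangle$ (using one ancilla qubit). *)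

theory Defs
  imports Complex_Main "Jordan_Normal_Form.Matrix"
begin

text \<open>Computational basis state |j> of n qubits (j = 0 .. 2^n - 1; the paper counts 1 .. 2^n).\<close>
definition ket :: "nat \<Rightarrow> nat \<Rightarrow> complex vec" where
  "ket n j = unit_vec (2 ^ n) j"

text \<open>Tensor (Kronecker) product; the left factor is the most significant part of the index.\<close>
definition kron_vec :: "complex vec \<Rightarrow> complex vec \<Rightarrow> complex vec" where
  "kron_vec u v = vec (dim_vec u * dim_vec v) (\<lambda>i. u $ (i div dim_vec v) * v $ (i mod dim_vec v))"

definition kron :: "complex mat \<Rightarrow> complex mat \<Rightarrow> complex mat" where
  "kron A B = mat (dim_row A * dim_row B) (dim_col A * dim_col B)
     (\<lambda>(i, j). A $$ (i div dim_row B, j div dim_col B) * B $$ (i mod dim_row B, j mod dim_col B))"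

definition outer :: "complex vec \<Rightarrow> complex vec \<Rightarrow> complex mat" where
  "outer u v = mat (dim_vec u) (dim_vec v) (\<lambda>(i, j). u $ i * cnj (v $ j))"

definition adj :: "complex mat \<Rightarrow> complex mat" where
  "adj A = mat (dim_col A) (dim_row A) (\<lambda>(i, j). cnj (A $$ (j, i)))"

definition unitary :: "nat \<Rightarrow> complex mat \<Rightarrow> bool" where
  "unitary d A \<longleftrightarrow> A \<in> carrier_mat d d \<and> adj A * A = 1\<^sub>m d \<and> A * adj A = 1\<^sub>m d"

definition vnorm :: "complex vec \<Rightarrow> real" where
  "vnorm v = sqrt (\<Sum>i<dim_vec v. (cmod (v $ i))\<^sup>2)"

definition refl_op :: "complex vec \<Rightarrow> complex mat" where
  "refl_op psi = 1\<^sub>m (dim_vec psi) - (2::complex) \<cdot>\<^sub>m outer psi psi"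

definition U_sim :: "nat \<Rightarrow> complex mat \<Rightarrow> complex mat" where
  "U_sim n U = kron (outer (ket 1 0) (ket 1 1)) U + kron (outer (ket 1 1) (ket 1 0)) (adj U)"

text \<open>|w_j^pm> = (|1>|j> pm |0>|u_j>)/sqrt 2, with sign s = 1 or s = -1.\<close>
definition w_vec :: "nat \<Rightarrow> complex mat \<Rightarrow> complex \<Rightarrow> nat \<Rightarrow> complex vec" where
  "w_vec n U s j = complex_of_real (1 / sqrt 2) \<cdot>\<^sub>v
     (kron_vec (ket 1 1) (ket n j) + s \<cdot>\<^sub>v kron_vec (ket 1 0) (col U j))"

end

theory Submission
  imports Defs
begin

text \<open>The vectors \<open>|w\<^sub>j\<^sup>\<plusminus>\<rangle>\<close> are orthonormal because the columns of \<open>U\<close> are.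
  Reflections in mutually orthogonal unit vectors multiply to \<open>I - 2P\<close>, where \<open>P\<close> is the orthogonal
  projection onto their span. For the vectors \<open>|w\<^sub>j\<^sup>-\<rangle>\<close>, in the block decomposition given by
  the ancilla qubit, \<open>2P = [[I, -U], [-U\<^sup>\<dagger>, I]]\<close> because the rows of \<open>U\<close> are orthonormal, so
  \<open>I - 2P = [[0, U], [U\<^sup>\<dagger>, 0]] = U'\<close>. Being a reflection, \<open>U'\<close> is unitary.\<close>

definition orthonormal_on :: "nat \<Rightarrow> (nat \<Rightarrow> complex vec) \<Rightarrow> nat set \<Rightarrow> bool" where
  "orthonormal_on d v A \<longleftrightarrow> (\<forall>a\<in>A. v a \<in> carrier_vec d) \<and>
     (\<forall>a\<in>A. \<forall>b\<in>A. v a \<bullet>c v b = (if a = b then 1 else 0))"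

text \<open>For an orthonormal family this is the orthogonal projection onto the span of \<open>v ` A\<close>.\<close>

definition proj_mat :: "nat \<Rightarrow> (nat \<Rightarrow> complex vec) \<Rightarrow> nat set \<Rightarrow> complex mat" where
  "proj_mat d v A = mat d d (\<lambda>(i, j). \<Sum>a\<in>A. v a $ i * cnj (v a $ j))"

lemma cscalar_prod_eq_sum:
  assumes "v \<in> carrier_vec d" and "w \<in> carrier_vec d"
  shows "v \<bullet>c w = (\<Sum>k<d. v $ k * cnj (w $ k))"
  using assms by (simp add: scalar_prod_def conjugate_vec_def lessThan_atLeast0)

lemma vnorm_eq_sqrt_cscalar_prod: "vnorm v = sqrt (Re (v \<bullet>c v))"
proof -
  have "(\<Sum>i<dim_vec v. (cmod (v $ i))\<^sup>2) = Re (\<Sum>i<dim_vec v. v $ i * cnj (v $ i))"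
    by (simp add: complex_norm_square[symmetric] Re_sum)
  then show ?thesis
    by (simp add: vnorm_def cscalar_prod_eq_sum[of v "dim_vec v" v])
qed

lemma orthonormal_onD:
  assumes "orthonormal_on d v A" and "a \<in> A" and "b \<in> A"
  shows "(\<Sum>k<d. v a $ k * cnj (v b $ k)) = (if a = b then 1 else 0)"
  using assms by (simp add: orthonormal_on_def cscalar_prod_eq_sum[symmetric])

lemma dim_proj_mat [simp]: "dim_row (proj_mat d v A) = d" "dim_col (proj_mat d v A) = d"
  by (simp_all add: proj_mat_def)

lemma proj_mat_carrier [simp]: "proj_mat d v A \<in> carrier_mat d d"
  by (simp add: carrier_matI)

lemma proj_mat_empty [simp]: "proj_mat d v {} = 0\<^sub>m d d"
  by (intro eq_matI) (simp_all add: proj_mat_def)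

lemma proj_mat_Un_disjoint:
  "finite A \<Longrightarrow> finite B \<Longrightarrow> A \<inter> B = {} \<Longrightarrow> proj_mat d v (A \<union> B) = proj_mat d v A + proj_mat d v B"
  by (intro eq_matI) (simp_all add: proj_mat_def sum.union_disjoint)

lemma outer_eq_proj_mat_singleton:
  "v a \<in> carrier_vec d \<Longrightarrow> outer (v a) (v a) = proj_mat d v {a}"
  by (intro eq_matI) (auto simp: outer_def proj_mat_def)

lemma proj_mat_mult:
  assumes "finite A" and "finite B" and ortho: "orthonormal_on d v (A \<union> B)"
  shows "proj_mat d v A * proj_mat d v B = proj_mat d v (A \<inter> B)"
proof (rule eq_matI)
  fix i j assume "i < dim_row (proj_mat d v (A \<inter> B))" "j < dim_col (proj_mat d v (A \<inter> B))"
  then have i: "i < d" and j: "j < d" by (auto simp: proj_mat_def)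
  have "(proj_mat d v A * proj_mat d v B) $$ (i, j)
      = (\<Sum>k<d. (\<Sum>a\<in>A. v a $ i * cnj (v a $ k)) * (\<Sum>b\<in>B. v b $ k * cnj (v b $ j)))"
    using i j by (simp add: proj_mat_def scalar_prod_def lessThan_atLeast0)
  also have "\<dots> = (\<Sum>a\<in>A. \<Sum>b\<in>B. v a $ i * cnj (v b $ j) * (\<Sum>k<d. v b $ k * cnj (v a $ k)))"
    by (simp add: sum_product sum_distrib_left sum.swap[of _ "{..<d}"] mult_ac)
  also have "\<dots> = (\<Sum>a\<in>A. \<Sum>b\<in>B. if a = b then v a $ i * cnj (v a $ j) else 0)"
    using orthonormal_onD[OF ortho] by (intro sum.cong refl) auto
  also have "\<dots> = (\<Sum>a\<in>A \<inter> B. v a $ i * cnj (v a $ j))"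
    using assms(1,2) by (simp add: sum.delta sum.inter_restrict)
  also have "\<dots> = proj_mat d v (A \<inter> B) $$ (i, j)"
    using i j by (simp add: proj_mat_def)
  finally show "(proj_mat d v A * proj_mat d v B) $$ (i, j) = proj_mat d v (A \<inter> B) $$ (i, j)" .
qed (simp_all add: proj_mat_def)

lemma one_minus_two_smult_mult:
  fixes X Y :: "complex mat"
  assumes X: "X \<in> carrier_mat d d" and Y: "Y \<in> carrier_mat d d"
  shows "(1\<^sub>m d - 2 \<cdot>\<^sub>m X) * (1\<^sub>m d - 2 \<cdot>\<^sub>m Y) = 1\<^sub>m d - 2 \<cdot>\<^sub>m (X + Y) + 4 \<cdot>\<^sub>m (X * Y)"
proof -
  have "(1\<^sub>m d - 2 \<cdot>\<^sub>m X) * (1\<^sub>m d - 2 \<cdot>\<^sub>m Y) = 1\<^sub>m d * (1\<^sub>m d - 2 \<cdot>\<^sub>m Y) - (2 \<cdot>\<^sub>m X) * (1\<^sub>m d - 2 \<cdot>\<^sub>m Y)"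
    using X Y by (intro minus_mult_distrib_mat) auto
  also have "\<dots> = (1\<^sub>m d - 2 \<cdot>\<^sub>m Y) - ((2 \<cdot>\<^sub>m X) * 1\<^sub>m d - (2 \<cdot>\<^sub>m X) * (2 \<cdot>\<^sub>m Y))"
    using X Y by (subst mult_minus_distrib_mat[of _ d d]) auto
  also have "(2 \<cdot>\<^sub>m X) * (2 \<cdot>\<^sub>m Y) = 4 \<cdot>\<^sub>m (X * Y)"
    using X Y by (simp add: mult_smult_distrib[of _ d d] mult_smult_assoc_mat[of _ d d]) (intro eq_matI, auto)
  finally show ?thesis
    using X Y by (intro eq_matI) auto
qed

lemma foldr_refl_op_eq_proj_mat:
  assumes "distinct xs" and "orthonormal_on d v (set xs)"
  shows "foldr (\<lambda>j M. refl_op (v j) * M) xs (1\<^sub>m d) = 1\<^sub>m d - 2 \<cdot>\<^sub>m proj_mat d v (set xs)"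
  using assms
proof (induction xs)
  case Nil
  then show ?case by (intro eq_matI) (simp_all add: proj_mat_def)
next
  case (Cons a xs)
  have ortho: "orthonormal_on d v (set xs)" and va: "v a \<in> carrier_vec d"
    using Cons.prems by (auto simp: orthonormal_on_def)
  have "foldr (\<lambda>j M. refl_op (v j) * M) (a # xs) (1\<^sub>m d)
      = refl_op (v a) * (1\<^sub>m d - 2 \<cdot>\<^sub>m proj_mat d v (set xs))"
    using Cons.IH Cons.prems ortho by simp
  also have "refl_op (v a) = 1\<^sub>m d - 2 \<cdot>\<^sub>m proj_mat d v {a}"
    using va by (simp add: refl_op_def outer_eq_proj_mat_singleton)
  also have "(1\<^sub>m d - 2 \<cdot>\<^sub>m proj_mat d v {a}) * (1\<^sub>m d - 2 \<cdot>\<^sub>m proj_mat d v (set xs))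
      = 1\<^sub>m d - 2 \<cdot>\<^sub>m (proj_mat d v {a} + proj_mat d v (set xs))
        + 4 \<cdot>\<^sub>m (proj_mat d v {a} * proj_mat d v (set xs))"
    by (rule one_minus_two_smult_mult) simp_all
  also have "proj_mat d v {a} * proj_mat d v (set xs) = 0\<^sub>m d d"
    using Cons.prems proj_mat_mult[of "{a}" "set xs" d v] by auto
  also have "proj_mat d v {a} + proj_mat d v (set xs) = proj_mat d v (set (a # xs))"
    using Cons.prems proj_mat_Un_disjoint[of "{a}" "set xs" d v] by simp
  finally show ?case
    by (intro eq_matI) simp_all
qed

lemma unitary_one_minus_two_proj_mat:
  assumes "finite A" and "orthonormal_on d v A"
  shows "unitary d (1\<^sub>m d - 2 \<cdot>\<^sub>m proj_mat d v A)"
proof -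
  let ?P = "proj_mat d v A"
  have "adj (1\<^sub>m d - 2 \<cdot>\<^sub>m ?P) = 1\<^sub>m d - 2 \<cdot>\<^sub>m ?P"
    by (intro eq_matI) (auto simp: adj_def proj_mat_def mult.commute)
  moreover have "(1\<^sub>m d - 2 \<cdot>\<^sub>m ?P) * (1\<^sub>m d - 2 \<cdot>\<^sub>m ?P) = 1\<^sub>m d"
    using assms by (simp add: one_minus_two_smult_mult proj_mat_mult) (intro eq_matI; simp)
  ultimately show ?thesis
    by (simp add: unitary_def carrier_matI)
qed

lemma div_mod_upper_half:
  fixes N i :: nat
  assumes "N \<le> i" and "i < 2 * N"
  shows "i div N = 1" and "i mod N = i - N"
  using assms le_div_geq[of N i] le_mod_geq[of N i] by auto

lemma sum_lessThan_double:
  fixes f :: "nat \<Rightarrow> 'a::comm_monoid_add"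
  shows "(\<Sum>k<2 * N. f k) = (\<Sum>k<N. f k) + (\<Sum>k<N. f (N + k))"
  by (simp add: mult_2 lessThan_atLeast0 sum.atLeastLessThan_concat[of 0 N "N + N", symmetric]
      sum.shift_bounds_nat_ivl[of f 0 N N, simplified] add.commute)

lemma kron_vec_ket_zero:
  "kron_vec (ket 1 0) v = vec (2 * dim_vec v) (\<lambda>i. if i < dim_vec v then v $ i else 0)"
  by (intro eq_vecI) (auto simp: kron_vec_def ket_def div_mod_upper_half)

lemma kron_vec_ket_one:
  "kron_vec (ket 1 1) v = vec (2 * dim_vec v) (\<lambda>i. if dim_vec v \<le> i then v $ (i - dim_vec v) else 0)"
  by (intro eq_vecI) (auto simp: kron_vec_def ket_def div_mod_upper_half)

lemma w_vec_explicit: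
  assumes "U \<in> carrier_mat (2 ^ n) (2 ^ n)" and "j < 2 ^ n"
  shows "w_vec n U s j = vec (2 * 2 ^ n) (\<lambda>i. complex_of_real (1 / sqrt 2) *
    ((if i = 2 ^ n + j then 1 else 0) + s * (if i < 2 ^ n then U $$ (i, j) else 0)))"
  unfolding w_vec_def kron_vec_ket_zero kron_vec_ket_one
  using assms by (intro eq_vecI) (auto simp: ket_def unit_vec_def)

text \<open>The block matrix \<open>[[0, U], [U\<^sup>\<dagger>, 0]]\<close>; indices below \<open>N\<close> carry the ancilla state \<open>|0\<rangle>\<close>.\<close>

definition offdiag_block_mat :: "nat \<Rightarrow> complex mat \<Rightarrow> complex mat" where
  "offdiag_block_mat N U = mat (2 * N) (2 * N) (\<lambda>(i, j).
     if i < N \<and> N \<le> j then U $$ (i, j - N)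
     else if N \<le> i \<and> j < N then cnj (U $$ (j, i - N)) else 0)"

lemma U_sim_eq_offdiag_block_mat:
  assumes "U \<in> carrier_mat (2 ^ n) (2 ^ n)"
  shows "U_sim n U = offdiag_block_mat (2 ^ n) U"
  using assms
  by (intro eq_matI)
    (auto simp: U_sim_def offdiag_block_mat_def kron_def outer_def ket_def adj_def div_mod_upper_half)

lemma mult_adj_nth:
  assumes "U \<in> carrier_mat N N" and "a < N" and "b < N"
  shows "(U * adj U) $$ (a, b) = (\<Sum>k<N. U $$ (a, k) * cnj (U $$ (b, k)))"
    and "(adj U * U) $$ (a, b) = (\<Sum>k<N. cnj (U $$ (k, a)) * U $$ (k, b))"
  using assms by (simp_all add: adj_def scalar_prod_def lessThan_atLeast0)

lemma of_real_inv_sqrt2_squared: "complex_of_real (1 / sqrt 2) * complex_of_real (1 / sqrt 2) = 1 / 2"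
  by (simp flip: of_real_mult)

lemma w_vec_orthonormal:
  assumes U: "U \<in> carrier_mat (2 ^ n) (2 ^ n)" and cols: "adj U * U = 1\<^sub>m (2 ^ n)"
    and s: "cmod s = 1"
  shows "orthonormal_on (2 * 2 ^ n) (w_vec n U s) {..<2 ^ n}"
  unfolding orthonormal_on_def
proof (intro conjI ballI)
  fix a b :: nat assume "a \<in> {..<2 ^ n}" "b \<in> {..<2 ^ n}"
  then have a: "a < 2 ^ n" and b: "b < 2 ^ n" by auto
  let ?c = "complex_of_real (1 / sqrt 2)"
  have ss: "s * cnj s = 1"
    using s by (simp flip: complex_norm_square)
  have "w_vec n U s a \<bullet>c w_vec n U s b
      = (\<Sum>k<2 ^ n. ?c * ?c * (s * cnj s) * (U $$ (k, a) * cnj (U $$ (k, b))))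
        + (\<Sum>k<2 ^ n. ?c * ?c * (if k = a \<and> k = b then 1 else 0))"
    using U a b
    by (simp add: cscalar_prod_eq_sum[of _ "2 * 2 ^ n"] w_vec_explicit sum_lessThan_double)
      (auto intro!: sum.cong simp: mult_ac)
  also have "\<dots> = 1 / 2 * cnj ((adj U * U) $$ (a, b)) + 1 / 2 * (if a = b then 1 else 0)"
    unfolding of_real_inv_sqrt2_squared ss mult_1_right sum_distrib_left[symmetric]
    using U a b by (cases "a = b") (auto simp: mult_adj_nth mult.commute intro!: sum.neutral)
  also have "\<dots> = (if a = b then 1 else 0)"
    using cols a b by simp
  finally show "w_vec n U s a \<bullet>c w_vec n U s b = (if a = b then 1 else 0)" .
qed (use U in \<open>simp add: w_vec_explicit\<close>)

lemma sum_w_vec_minus_outer: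
  assumes U: "U \<in> carrier_mat (2 ^ n) (2 ^ n)" and rows: "U * adj U = 1\<^sub>m (2 ^ n)"
    and i: "i < 2 * 2 ^ n" and j: "j < 2 * 2 ^ n"
  shows "(\<Sum>b<2 ^ n. w_vec n U (-1) b $ i * cnj (w_vec n U (-1) b $ j))
    = (if (i < 2 ^ n) = (j < 2 ^ n) then (if i = j then 1 / 2 else 0)
       else - 1 / 2 * offdiag_block_mat (2 ^ n) U $$ (i, j))"
proof -
  define N :: nat where "N = 2 ^ n"
  let ?c = "complex_of_real (1 / sqrt 2)"
  have w: "w_vec n U (-1) b $ k = ?c * ((if k = N + b then 1 else 0) - (if k < N then U $$ (k, b) else 0))"
    if "b < N" and "k < 2 * N" for b k
    using U that by (simp add: w_vec_explicit N_def)
  have half: "?c * ?c = 1 / 2" by (rule of_real_inv_sqrt2_squared)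
  from i j have i: "i < 2 * N" and j: "j < 2 * N" by (simp_all add: N_def)
  have "(\<Sum>b<N. w_vec n U (-1) b $ i * cnj (w_vec n U (-1) b $ j))
    = (if (i < N) = (j < N) then (if i = j then 1 / 2 else 0)
       else - 1 / 2 * offdiag_block_mat N U $$ (i, j))"
  proof (cases "i < N"; cases "j < N")
    assume "i < N" "j < N"
    then have "(\<Sum>b<N. w_vec n U (-1) b $ i * cnj (w_vec n U (-1) b $ j))
        = 1 / 2 * (U * adj U) $$ (i, j)"
      using U i j by (simp add: w mult_adj_nth N_def sum_distrib_left half[symmetric] mult_ac)
    also have "\<dots> = (if i = j then 1 / 2 else 0)"
      using rows \<open>i < N\<close> \<open>j < N\<close> by (simp add: N_def)
    finally show ?thesis
      using \<open>i < N\<close> \<open>j < N\<close> by simp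
  next
    assume "i < N" "\<not> j < N"
    then have "(\<Sum>b<N. w_vec n U (-1) b $ i * cnj (w_vec n U (-1) b $ j))
        = (\<Sum>b<N. if b = j - N then - 1 / 2 * U $$ (i, b) else 0)"
      using i j by (intro sum.cong refl) (auto simp: w half[symmetric] mult_ac)
    with \<open>i < N\<close> \<open>\<not> j < N\<close> show ?thesis
      using j by (simp add: offdiag_block_mat_def)
  next
    assume "\<not> i < N" "j < N"
    then have "(\<Sum>b<N. w_vec n U (-1) b $ i * cnj (w_vec n U (-1) b $ j))
        = (\<Sum>b<N. if b = i - N then - 1 / 2 * cnj (U $$ (j, b)) else 0)"
      using i j by (intro sum.cong refl) (auto simp: w half[symmetric] mult_ac)
    with \<open>\<not> i < N\<close> \<open>j < N\<close> show ?thesis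
      using i by (simp add: offdiag_block_mat_def)
  next
    assume "\<not> i < N" "\<not> j < N"
    then have "(\<Sum>b<N. w_vec n U (-1) b $ i * cnj (w_vec n U (-1) b $ j))
        = (\<Sum>b<N. if b = i - N then (if i = j then 1 / 2 else 0) else 0)"
      using i j by (intro sum.cong refl) (auto simp: w half[symmetric])
    with \<open>\<not> i < N\<close> \<open>\<not> j < N\<close> show ?thesis
      using i j by auto
  qed
  then show ?thesis by (simp add: N_def)
qed

lemma one_minus_two_proj_mat_w_vec:
  assumes U: "U \<in> carrier_mat (2 ^ n) (2 ^ n)" and rows: "U * adj U = 1\<^sub>m (2 ^ n)"
  shows "1\<^sub>m (2 * 2 ^ n) - 2 \<cdot>\<^sub>m proj_mat (2 * 2 ^ n) (w_vec n U (-1)) {..<2 ^ n}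
    = offdiag_block_mat (2 ^ n) U"
  using sum_w_vec_minus_outer[OF U rows]
  by (intro eq_matI) (auto simp: proj_mat_def offdiag_block_mat_def)

lemma offdiag_block_mat_mult_kron_ket_one:
  assumes U: "U \<in> carrier_mat N N" and phi: "\<phi> \<in> carrier_vec N"
  shows "offdiag_block_mat N U *\<^sub>v kron_vec (ket 1 1) \<phi> = kron_vec (ket 1 0) (U *\<^sub>v \<phi>)"
proof (rule eq_vecI)
  fix i assume "i < dim_vec (kron_vec (ket 1 0) (U *\<^sub>v \<phi>))"
  then have i: "i < 2 * N" using U unfolding kron_vec_ket_zero by simp
  have "(offdiag_block_mat N U *\<^sub>v kron_vec (ket 1 1) \<phi>) $ i
      = (\<Sum>k<N. offdiag_block_mat N U $$ (i, N + k) * \<phi> $ k)"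
    unfolding kron_vec_ket_one using i phi
    by (simp add: scalar_prod_def lessThan_atLeast0[symmetric] sum_lessThan_double
        offdiag_block_mat_def)
  also have "\<dots> = (if i < N then (\<Sum>k<N. U $$ (i, k) * \<phi> $ k) else 0)"
    using i by (simp add: offdiag_block_mat_def)
  also have "\<dots> = kron_vec (ket 1 0) (U *\<^sub>v \<phi>) $ i"
    unfolding kron_vec_ket_zero using i U phi by (simp add: scalar_prod_def lessThan_atLeast0)
  finally show "(offdiag_block_mat N U *\<^sub>v kron_vec (ket 1 1) \<phi>) $ i = kron_vec (ket 1 0) (U *\<^sub>v \<phi>) $ i" .
qed (unfold kron_vec_ket_zero kron_vec_ket_one, use U phi in \<open>simp add: offdiag_block_mat_def\<close>)

theorem lemma3:
  fixes n :: nat and U :: "complex mat"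
  assumes "unitary (2 ^ n) U"
  shows "unitary (2 ^ (n + 1)) (U_sim n U)
    \<and> (\<forall>\<phi> \<in> carrier_vec (2 ^ n).
          U_sim n U *\<^sub>v kron_vec (ket 1 1) \<phi> = kron_vec (ket 1 0) (U *\<^sub>v \<phi>))
    \<and> (\<forall>j < 2 ^ n. vnorm (w_vec n U 1 j) = 1 \<and> vnorm (w_vec n U (-1) j) = 1)
    \<and> U_sim n U = foldr (\<lambda>j M. refl_op (w_vec n U (-1) j) * M) [0..<2 ^ n] (1\<^sub>m (2 ^ (n + 1)))"
proof -
  have U: "U \<in> carrier_mat (2 ^ n) (2 ^ n)" and cols: "adj U * U = 1\<^sub>m (2 ^ n)"
    and rows: "U * adj U = 1\<^sub>m (2 ^ n)"
    using assms by (auto simp: unitary_def)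
  have dim: "(2::nat) ^ (n + 1) = 2 * 2 ^ n" by simp
  have ortho: "orthonormal_on (2 * 2 ^ n) (w_vec n U s) {..<2 ^ n}" if "cmod s = 1" for s
    using w_vec_orthonormal[OF U cols that] .
  have reflection: "U_sim n U = 1\<^sub>m (2 * 2 ^ n) - 2 \<cdot>\<^sub>m proj_mat (2 * 2 ^ n) (w_vec n U (-1)) {..<2 ^ n}"
    using U_sim_eq_offdiag_block_mat[OF U] one_minus_two_proj_mat_w_vec[OF U rows] by simp
  have "unitary (2 ^ (n + 1)) (U_sim n U)"
    unfolding reflection dim using ortho[of "-1"] by (simp add: unitary_one_minus_two_proj_mat)
  moreover have "U_sim n U *\<^sub>v kron_vec (ket 1 1) \<phi> = kron_vec (ket 1 0) (U *\<^sub>v \<phi>)"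
    if "\<phi> \<in> carrier_vec (2 ^ n)" for \<phi>
    using U_sim_eq_offdiag_block_mat[OF U] offdiag_block_mat_mult_kron_ket_one[OF U that] by simp
  moreover have "vnorm (w_vec n U s j) = 1" if "cmod s = 1" and "j < 2 ^ n" for s j
    using ortho[OF that(1)] that(2) by (simp add: orthonormal_on_def vnorm_eq_sqrt_cscalar_prod)
  moreover have "U_sim n U = foldr (\<lambda>j M. refl_op (w_vec n U (-1) j) * M) [0..<2 ^ n] (1\<^sub>m (2 ^ (n + 1)))"
    unfolding reflection dim using ortho[of "-1"]
    by (simp add: foldr_refl_op_eq_proj_mat atLeast0LessThan)
  ultimately show ?thesis by simp
qed

end
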